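(* Let $q\in\mathbb{C}$ with $0<|q|\le 1$ and $A,B\in M_n$. (a) If $A,B\in\Pi^n_{s,\alpha}$ for some $\alpha\in[0,\pi/2)$, then $|q|^2 w_q(AB)\le \sec^2(\alpha)\, w_q(A)\,w_q(B)$. (b) If $A$ and $B$ are positive matrices, then $|q|^2 w_q(AB)\le w_q(A)\,w_q(B)$.
   Context: $M_n$ is the algebra of complex $n\times n$ matrices. For $|q|\le1$, $w_q(A)=\sup\{|\langle Ax,y\rangle|: \|x\|=\|y\|=1,\ \langle x,y\rangle=q\}$. For $\alpha\in[0,\pi/2)$, $S_\alpha=\{z:\operatorname{Re}z>0,\ |\operatorname{Im}z|\le\tan(\alpha)\operatorname{Re}z\}$ and $\Pi^n_{s,\alpha}=\{A\in M_n: W(A)\subseteq S_\alpha\}$, where $W(A)=\{\langle Ax,x\rangle:\|x\|=1\}$. Positive matrices are those in $\Pi^n_{s,0}$, i.e. positive definite matrices. *)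

theory Defs
  imports "HOL-Analysis.Analysis"
begin

text \<open>Matrices in M_n are complex^'n^'n for a finite index type 'n.
  Standard inner product on C^n, linear in the first argument.\<close>

definition cinner :: "complex^'n \<Rightarrow> complex^'n \<Rightarrow> complex" where
  "cinner x y = (\<Sum>i\<in>UNIV. x $ i * cnj (y $ i))"

text \<open>q-numerical radius. The supremum is taken over a set of nonnegative reals;
  we use the convention that the supremum of the empty set is 0 (relevant only
  when n = 1 and |q| < 1).\<close>

definition qnumradius :: "complex \<Rightarrow> complex^'n^'n \<Rightarrow> real" where
  "qnumradius q A = Sup (insert 0 {cmod (cinner (A *v x) y) | x y.
       norm x = 1 \<and> norm y = 1 \<and> cinner x y = q})"

definition numrange :: "complex^'n^'n \<Rightarrow> complex set" where
  "numrange A = {cinner (A *v x) x | x. norm x = 1}"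

definition sector :: "real \<Rightarrow> complex set" where
  "sector \<alpha> = {z. Re z > 0 \<and> \<bar>Im z\<bar> \<le> tan \<alpha> * Re z}"

definition Pi_s :: "real \<Rightarrow> (complex^'n^'n) set" where
  "Pi_s \<alpha> = {A. numrange A \<subseteq> sector \<alpha>}"

end

theory Submission
  imports Defs
begin

text \<open>
  For A with numerical range in the sector S_alpha the form <Ax, y> satisfies the generalised
  Cauchy-Schwarz inequality |<Ax, y>|^2 cos^2 alpha <= Re <Ax, x> Re <Ay, y>. For alpha = 0 the
  form is hermitian and positive semidefinite. For alpha > 0, multiplication by
  w = e^{i(pi/2 - alpha)} or by its conjugate rotates S_alpha into the closed right half-plane,
  so the hermitian parts of wA and of conj(w) A are positive semidefinite; the ordinary
  Cauchy-Schwarz inequality for both, combined through the identity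
  w Re(wA) - conj(w) Re(conj(w) A) = i sin(2 alpha) A, gives the claim.

  If Re <Az, z> <= M_A |z|^2 and Re <Bz, z> <= M_B |z|^2, this inequality for B at (x, Bx)
  gives |Bx| cos alpha <= M_B |x|, and then for A at (Bx, y) it gives
  |<ABx, y>| cos^2 alpha <= M_A M_B for unit x and y. Finally M = w_q(A) / |q| is such a bound:
  for a unit vector e orthogonal to z, the unit vectors y = conj(q) z +- sqrt(1 - |q|^2) e
  satisfy <z, y> = q, and the two values <Az, y> add up to 2q <Az, z>. (In dimension one with
  |q| < 1 there is no pair x, y with <x, y> = q, and w_q vanishes.)
\<close>

lemma cinner_add_left: "cinner (x + y) z = cinner x z + cinner y z"
  by (simp add: cinner_def distrib_right sum.distrib)

lemma cinner_add_right: "cinner x (y + z) = cinner x y + cinner x z"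
  by (simp add: cinner_def distrib_left sum.distrib)

lemma cinner_smult_left: "cinner (c *s x) y = c * cinner x y"
  by (simp add: cinner_def sum_distrib_left mult_ac)

lemma cinner_smult_right: "cinner x (c *s y) = cnj c * cinner x y"
  by (simp add: cinner_def sum_distrib_left mult_ac)

lemma cinner_commute: "cinner y x = cnj (cinner x y)"
  by (simp add: cinner_def mult.commute)

lemma cinner_zero_left [simp]: "cinner 0 y = 0"
  by (simp add: cinner_def)

lemma cinner_zero_right [simp]: "cinner x 0 = 0"
  by (simp add: cinner_def)

lemma cinner_self: "cinner x x = of_real ((norm x)\<^sup>2)"
proof -
  have "cinner x x = (\<Sum>i\<in>UNIV. of_real ((cmod (x $ i))\<^sup>2))"
    unfolding cinner_def by (intro sum.cong refl) (metis complex_norm_square)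
  then show ?thesis
    by (simp add: norm_vec_def L2_set_def sum_nonneg)
qed

lemma norm_eq_1_iff_cinner_self: "norm x = 1 \<longleftrightarrow> cinner x x = 1"
  unfolding cinner_self of_real_eq_1_iff by (smt (verit) norm_ge_zero power2_eq_1_iff)

lemma cinner_axis_right: "cinner z (axis i 1) = z $ i"
  by (simp add: cinner_def axis_def if_distrib cong: if_cong)

lemma norm_smult: "norm (c *s (x::complex^'n)) = cmod c * norm x"
proof -
  have "norm (c *s x) = sqrt ((cmod c)\<^sup>2 * (\<Sum>i\<in>UNIV. (cmod (x $ i))\<^sup>2))"
    by (simp add: norm_vec_def L2_set_def norm_mult power_mult_distrib sum_distrib_left)
  then show ?thesis
    by (simp add: real_sqrt_mult norm_vec_def L2_set_def)
qed

lemma quadratic_form_add_smult: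
  "cinner (A *v (x + c *s y)) (x + c *s y)
     = cinner (A *v x) x + c * cinner (A *v y) x + cnj c * cinner (A *v x) y
       + c * cnj c * cinner (A *v y) y"
  by (simp add: matrix_vector_right_distrib vector_scalar_commute cinner_add_left
      cinner_add_right cinner_smult_left cinner_smult_right algebra_simps)

lemma quadratic_form_normalize:
  assumes "z \<noteq> 0"
  obtains u where "norm u = 1" "cinner (A *v z) z = of_real ((norm z)\<^sup>2) * cinner (A *v u) u"
proof
  let ?u = "of_real (1 / norm z) *s z"
  show "norm ?u = 1"
    using assms by (simp add: norm_smult norm_divide)
  have "z = of_real (norm z) *s ?u"
    using assms by (simp add: vector_smult_assoc)
  then have "cinner (A *v z) z = of_real (norm z) * cnj (of_real (norm z)) * cinner (A *v ?u) ?u"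
    using quadratic_form_add_smult[of A 0 "of_real (norm z)" ?u] by simp
  then show "cinner (A *v z) z = of_real ((norm z)\<^sup>2) * cinner (A *v ?u) ?u"
    by (simp add: power2_eq_square)
qed

lemma le_mult_if_quadratic_nonneg:
  fixes P R m :: real
  assumes "0 \<le> P" "0 \<le> R" and quadratic: "\<And>t. 0 \<le> P - 2 * t * m + t\<^sup>2 * m * R"
  shows "m \<le> P * R"
proof (cases "R = 0")
  case True
  show ?thesis
  proof (rule ccontr)
    assume "\<not> m \<le> P * R"
    then have "0 < m"
      using True by simp
    have "0 \<le> P - 2 * (P / m + 1) * m"
      using quadratic[of "P / m + 1"] True by simp
    also have "\<dots> = - P - 2 * m"
      using \<open>0 < m\<close> by (simp add: field_simps)
    finally show False
      using \<open>0 \<le> P\<close> \<open>0 < m\<close> by simp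
  qed
next
  case False
  then have "0 < R"
    using \<open>0 \<le> R\<close> by simp
  have "0 \<le> P - 2 * (1 / R) * m + (1 / R)\<^sup>2 * m * R"
    by (rule quadratic)
  also have "\<dots> = (P * R - m) / R"
    using \<open>0 < R\<close> by (simp add: field_simps power2_eq_square)
  finally show ?thesis
    using \<open>0 < R\<close> by (simp add: zero_le_divide_iff)
qed

lemma hermitian_form_cauchy_schwarz:
  fixes g :: "complex^'n \<Rightarrow> complex^'n \<Rightarrow> complex"
  assumes expand: "\<And>x y c. g (x + c *s y) (x + c *s y)
                     = g x x + c * g y x + cnj c * g x y + c * cnj c * g y y"
    and hermitian: "\<And>x y. g y x = cnj (g x y)"
    and nonneg: "\<And>z. 0 \<le> Re (g z z)"
  shows "(cmod (g x y))\<^sup>2 \<le> Re (g x x) * Re (g y y)"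
proof (rule le_mult_if_quadratic_nonneg)
  show "0 \<le> Re (g x x)" "0 \<le> Re (g y y)"
    by (rule nonneg)+
  fix t :: real
  let ?b = "g x y"
  let ?c = "- (of_real t * ?b)"
  have swap: "g y x = cnj ?b"
    by (rule hermitian)
  have "0 \<le> Re (g (x + ?c *s y) (x + ?c *s y))"
    by (rule nonneg)
  also have "g (x + ?c *s y) (x + ?c *s y) = g x x + ?c * cnj ?b + cnj ?c * ?b + ?c * cnj ?c * g y y"
    unfolding expand swap ..
  also have "\<dots> = g x x - 2 * of_real t * (?b * cnj ?b) + (of_real t)\<^sup>2 * (?b * cnj ?b) * g y y"
    by (simp add: algebra_simps power2_eq_square)
  also have "\<dots> = g x x - of_real (2 * t * (cmod ?b)\<^sup>2) + of_real (t\<^sup>2 * (cmod ?b)\<^sup>2) * g y y"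
    unfolding complex_norm_square[symmetric] by simp
  finally show "0 \<le> Re (g x x) - 2 * t * (cmod ?b)\<^sup>2 + t\<^sup>2 * (cmod ?b)\<^sup>2 * Re (g y y)"
    by simp
qed

definition re_form :: "complex \<Rightarrow> complex^'n^'n \<Rightarrow> complex^'n \<Rightarrow> complex^'n \<Rightarrow> complex" where
  "re_form w A x y = (w * cinner (A *v x) y + cnj w * cnj (cinner (A *v y) x)) / 2"

lemma Re_re_form_diag [simp]: "Re (re_form w A z z) = Re (w * cinner (A *v z) z)"
  by (simp add: re_form_def)

lemma re_form_cauchy_schwarz:
  assumes "\<And>z. 0 \<le> Re (w * cinner (A *v z) z)"
  shows "(cmod (re_form w A x y))\<^sup>2
           \<le> Re (w * cinner (A *v x) x) * Re (w * cinner (A *v y) y)"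
proof -
  have "(cmod (re_form w A x y))\<^sup>2 \<le> Re (re_form w A x x) * Re (re_form w A y y)"
  proof (rule hermitian_form_cauchy_schwarz)
    show "re_form w A (x + c *s y) (x + c *s y)
        = re_form w A x x + c * re_form w A y x + cnj c * re_form w A x y
          + c * cnj c * re_form w A y y" for x y c
      unfolding re_form_def quadratic_form_add_smult by (simp add: field_simps)
    show "re_form w A y x = cnj (re_form w A x y)" for x y
      by (simp add: re_form_def algebra_simps)
    show "0 \<le> Re (re_form w A z z)" for z
      using assms by simp
  qed
  then show ?thesis
    by simp
qed

lemma hermitian_if_real_quadratic_form:
  assumes "\<And>z. Im (cinner (A *v z) z) = 0"
  shows "cinner (A *v y) x = cnj (cinner (A *v x) y)"
proof -
  have "Im (cinner (A *v (x + c *s y)) (x + c *s y)) = 0" for c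
    by (rule assms)
  from this[of 1] this[of "\<i>"] assms[of x] assms[of y]
  show ?thesis
    unfolding quadratic_form_add_smult by (simp add: complex_eq_iff)
qed

lemma add_power2_le_mult_add:
  fixes u v a b c d :: real
  assumes "0 \<le> u" "0 \<le> v" "0 \<le> a" "0 \<le> b" "0 \<le> c" "0 \<le> d"
    and "u\<^sup>2 \<le> a * b" "v\<^sup>2 \<le> c * d"
  shows "(u + v)\<^sup>2 \<le> (a + c) * (b + d)"
proof -
  have "(u * v)\<^sup>2 \<le> (a * d) * (c * b)"
    using assms mult_mono[OF assms(7,8)] by (simp add: power_mult_distrib mult_ac)
  also have "\<dots> \<le> ((a * d + c * b) / 2)\<^sup>2"
    using sum_squares_ge_zero[of "a * d - c * b" 0] by (simp add: power2_eq_square field_simps)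
  finally have "u * v \<le> (a * d + c * b) / 2"
    by (rule power2_le_imp_le) (use assms in simp)
  then show ?thesis
    using assms by (simp add: power2_eq_square algebra_simps)
qed

lemma re_form_rotation_identity:
  assumes "w * cnj w = 1"
  shows "w * re_form w A x y - cnj w * re_form (cnj w) A x y
           = (w\<^sup>2 - (cnj w)\<^sup>2) / 2 * cinner (A *v x) y"
  unfolding re_form_def using assms by (simp add: field_simps power2_eq_square)

lemma cos_mult_abs_Im_le_sin_mult_Re:
  assumes "0 \<le> \<alpha>" "\<alpha> < pi / 2" "w \<in> sector \<alpha>"
  shows "cos \<alpha> * \<bar>Im w\<bar> \<le> sin \<alpha> * Re w"
proof -
  have "0 < cos \<alpha>"
    using assms by (simp add: cos_gt_zero_pi)
  then have "cos \<alpha> * \<bar>Im w\<bar> \<le> cos \<alpha> * (tan \<alpha> * Re w)"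
    using assms(3) by (simp add: sector_def)
  also have "\<dots> = sin \<alpha> * Re w"
    using \<open>0 < cos \<alpha>\<close> by (simp add: tan_def)
  finally show ?thesis .
qed

lemma Pi_s_quadratic_form:
  assumes "0 \<le> \<alpha>" "\<alpha> < pi / 2" "A \<in> Pi_s \<alpha>"
  shows "0 \<le> Re (cinner (A *v z) z)"
    and "cos \<alpha> * \<bar>Im (cinner (A *v z) z)\<bar> \<le> sin \<alpha> * Re (cinner (A *v z) z)"
proof -
  have "0 \<le> Re (cinner (A *v z) z) \<and>
      cos \<alpha> * \<bar>Im (cinner (A *v z) z)\<bar> \<le> sin \<alpha> * Re (cinner (A *v z) z)"
  proof (cases "z = 0")
    case True
    then show ?thesis by simp
  next
    case False
    then obtain u where "norm u = 1" and z: "cinner (A *v z) z = of_real ((norm z)\<^sup>2) * cinner (A *v u) u"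
      by (rule quadratic_form_normalize)
    then have "cinner (A *v u) u \<in> sector \<alpha>"
      using assms(3) by (auto simp: Pi_s_def numrange_def)
    then have "0 < Re (cinner (A *v u) u)"
      and "cos \<alpha> * \<bar>Im (cinner (A *v u) u)\<bar> \<le> sin \<alpha> * Re (cinner (A *v u) u)"
      using cos_mult_abs_Im_le_sin_mult_Re[OF assms(1,2)] by (auto simp: sector_def)
    then show ?thesis
      unfolding z using mult_left_mono[OF _ zero_le_power2[of "norm z"]]
      by (fastforce simp: abs_mult mult.left_commute)
  qed
  then show "0 \<le> Re (cinner (A *v z) z)"
    and "cos \<alpha> * \<bar>Im (cinner (A *v z) z)\<bar> \<le> sin \<alpha> * Re (cinner (A *v z) z)"
    by auto
qed

text \<open>Here Complex (sin alpha) (cos alpha) = e^{i(pi/2 - alpha)}.\<close>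

lemma Pi_s_rotation_nonneg:
  assumes "0 \<le> \<alpha>" "\<alpha> < pi / 2" "A \<in> Pi_s \<alpha>"
  shows "0 \<le> Re (Complex (sin \<alpha>) (cos \<alpha>) * cinner (A *v z) z)"
    and "0 \<le> Re (cnj (Complex (sin \<alpha>) (cos \<alpha>)) * cinner (A *v z) z)"
proof -
  have "0 \<le> cos \<alpha>"
    using assms by (simp add: cos_gt_zero_pi less_imp_le)
  then have "\<bar>cos \<alpha> * Im (cinner (A *v z) z)\<bar> \<le> sin \<alpha> * Re (cinner (A *v z) z)"
    using Pi_s_quadratic_form(2)[OF assms, of z] by (simp add: abs_mult)
  then show "0 \<le> Re (Complex (sin \<alpha>) (cos \<alpha>) * cinner (A *v z) z)"
    and "0 \<le> Re (cnj (Complex (sin \<alpha>) (cos \<alpha>)) * cinner (A *v z) z)"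
    by (auto simp: abs_le_iff)
qed

lemma Pi_s_0_cauchy_schwarz:
  assumes "A \<in> Pi_s 0"
  shows "(cmod (cinner (A *v x) y))\<^sup>2 \<le> Re (cinner (A *v x) x) * Re (cinner (A *v y) y)"
proof -
  have "Im (cinner (A *v z) z) = 0" for z
    using Pi_s_quadratic_form(2)[OF _ _ assms, of z] by simp
  then have "re_form 1 A x y = cinner (A *v x) y"
    using hermitian_if_real_quadratic_form[of A x y] by (simp add: re_form_def)
  then show ?thesis
    using re_form_cauchy_schwarz[of 1 A x y] Pi_s_quadratic_form(1)[OF _ _ assms] by simp
qed

lemma Pi_s_cauchy_schwarz_pos:
  assumes "0 < \<alpha>" "\<alpha> < pi / 2" "A \<in> Pi_s \<alpha>"
  shows "(cmod (cinner (A *v x) y))\<^sup>2 * (cos \<alpha>)\<^sup>2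
           \<le> Re (cinner (A *v x) x) * Re (cinner (A *v y) y)"
proof -
  define s where "s = sin \<alpha>"
  define c where "c = cos \<alpha>"
  have "0 < s" "0 < c"
    using assms by (simp_all add: s_def c_def sin_gt_zero cos_gt_zero_pi)
  define w where "w = Complex s c"
  have "cmod w = 1"
    by (simp add: w_def s_def c_def cmod_def)
  then have "w * cnj w = 1"
    by (metis complex_norm_square mult.right_neutral of_real_1 power_one)
  have rot_nonneg: "0 \<le> Re (w * cinner (A *v z) z)" "0 \<le> Re (cnj w * cinner (A *v z) z)" for z
    unfolding w_def s_def c_def using Pi_s_rotation_nonneg assms less_imp_le by blast+
  have w2: "(w\<^sup>2 - (cnj w)\<^sup>2) / 2 = \<i> * of_real (2 * s * c)"
    by (simp add: w_def complex_eq_iff power2_eq_square)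
  let ?g1 = "re_form w A x y" and ?g2 = "re_form (cnj w) A x y"
  have "2 * s * c * cmod (cinner (A *v x) y) = cmod (w * ?g1 - cnj w * ?g2)"
    unfolding re_form_rotation_identity[OF \<open>w * cnj w = 1\<close>] w2 using \<open>0 < s\<close> \<open>0 < c\<close>
    by (simp add: norm_mult)
  also have "\<dots> \<le> cmod ?g1 + cmod ?g2"
    using norm_triangle_ineq4[of "w * ?g1" "cnj w * ?g2"] by (simp add: norm_mult \<open>cmod w = 1\<close>)
  finally have "(2 * s * c * cmod (cinner (A *v x) y))\<^sup>2 \<le> (cmod ?g1 + cmod ?g2)\<^sup>2"
    using \<open>0 < s\<close> \<open>0 < c\<close> by (simp add: power_mono)
  also have "\<dots> \<le> (Re (w * cinner (A *v x) x) + Re (cnj w * cinner (A *v x) x))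
                   * (Re (w * cinner (A *v y) y) + Re (cnj w * cinner (A *v y) y))"
    by (intro add_power2_le_mult_add re_form_cauchy_schwarz norm_ge_zero rot_nonneg)
  also have "\<dots> = (2 * s)\<^sup>2 * (Re (cinner (A *v x) x) * Re (cinner (A *v y) y))"
    by (simp add: w_def algebra_simps power2_eq_square)
  finally have "(2 * s)\<^sup>2 * ((cmod (cinner (A *v x) y))\<^sup>2 * c\<^sup>2)
      \<le> (2 * s)\<^sup>2 * (Re (cinner (A *v x) x) * Re (cinner (A *v y) y))"
    by (simp add: power_mult_distrib power2_eq_square algebra_simps)
  then show ?thesis
    using \<open>0 < s\<close> by (simp add: c_def)
qed

lemma sectorial_cauchy_schwarz:
  assumes "0 \<le> \<alpha>" "\<alpha> < pi / 2" "A \<in> Pi_s \<alpha>"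
  shows "(cmod (cinner (A *v x) y))\<^sup>2 * (cos \<alpha>)\<^sup>2
           \<le> Re (cinner (A *v x) x) * Re (cinner (A *v y) y)"
proof (cases "\<alpha> = 0")
  case True
  then show ?thesis
    using Pi_s_0_cauchy_schwarz assms(3) by simp
next
  case False
  then show ?thesis
    using Pi_s_cauchy_schwarz_pos[of \<alpha>] assms by simp
qed

lemma sectorial_form_bound:
  assumes "0 \<le> \<alpha>" "\<alpha> < pi / 2" "A \<in> Pi_s \<alpha>" "0 \<le> M"
    and bound: "\<And>z. Re (cinner (A *v z) z) \<le> M * (norm z)\<^sup>2"
  shows "cmod (cinner (A *v x) y) * cos \<alpha> \<le> M * norm x * norm y"
proof (rule power2_le_imp_le)
  have "(cmod (cinner (A *v x) y) * cos \<alpha>)\<^sup>2 \<le> Re (cinner (A *v x) x) * Re (cinner (A *v y) y)"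
    using sectorial_cauchy_schwarz[OF assms(1-3)] by (simp add: power_mult_distrib)
  also have "\<dots> \<le> (M * (norm x)\<^sup>2) * (M * (norm y)\<^sup>2)"
    using Pi_s_quadratic_form(1)[OF assms(1-3)] bound \<open>0 \<le> M\<close> by (intro mult_mono) auto
  also have "\<dots> = (M * norm x * norm y)\<^sup>2"
    by (simp add: power2_eq_square)
  finally show "(cmod (cinner (A *v x) y) * cos \<alpha>)\<^sup>2 \<le> (M * norm x * norm y)\<^sup>2" .
  show "0 \<le> M * norm x * norm y"
    using \<open>0 \<le> M\<close> by simp
qed

lemma sectorial_product_bound:
  assumes "0 \<le> \<alpha>" "\<alpha> < pi / 2" "A \<in> Pi_s \<alpha>" "B \<in> Pi_s \<alpha>" "0 \<le> M\<^sub>A" "0 \<le> M\<^sub>B"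
    and bound_A: "\<And>z. Re (cinner (A *v z) z) \<le> M\<^sub>A * (norm z)\<^sup>2"
    and bound_B: "\<And>z. Re (cinner (B *v z) z) \<le> M\<^sub>B * (norm z)\<^sup>2"
  shows "cmod (cinner ((A ** B) *v x) y) * (cos \<alpha>)\<^sup>2 \<le> M\<^sub>A * M\<^sub>B * norm x * norm y"
proof -
  define v where "v = B *v x"
  have "0 < cos \<alpha>"
    using assms by (simp add: cos_gt_zero_pi)
  have "norm v * cos \<alpha> \<le> M\<^sub>B * norm x"
  proof (cases "v = 0")
    case True
    then show ?thesis using assms by simp
  next
    case False
    have "cmod (cinner (B *v x) v) = (norm v)\<^sup>2"
      unfolding v_def cinner_self norm_of_real by simp
    then have "norm v * (norm v * cos \<alpha>) = cmod (cinner (B *v x) v) * cos \<alpha>"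
      by (simp add: power2_eq_square)
    also have "\<dots> \<le> norm v * (M\<^sub>B * norm x)"
      using sectorial_form_bound[OF assms(1,2,4,6) bound_B, of x v] by (simp add: mult_ac)
    finally show ?thesis
      using False by simp
  qed
  have "cmod (cinner ((A ** B) *v x) y) * (cos \<alpha>)\<^sup>2 = (cmod (cinner (A *v v) y) * cos \<alpha>) * cos \<alpha>"
    by (simp add: v_def matrix_vector_mul_assoc power2_eq_square)
  also have "\<dots> \<le> (M\<^sub>A * norm v * norm y) * cos \<alpha>"
    using sectorial_form_bound[OF assms(1-3,5) bound_A] \<open>0 < cos \<alpha>\<close> by (simp add: mult_right_mono)
  also have "\<dots> = M\<^sub>A * norm y * (norm v * cos \<alpha>)"
    by simp
  also have "\<dots> \<le> M\<^sub>A * norm y * (M\<^sub>B * norm x)"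
    using \<open>norm v * cos \<alpha> \<le> M\<^sub>B * norm x\<close> \<open>0 \<le> M\<^sub>A\<close> by (simp add: mult_left_mono)
  finally show ?thesis
    by (simp add: mult_ac)
qed

lemma cmod_cinner_le_entry_sum:
  fixes A :: "complex^'n^'n"
  assumes "norm x = 1" "norm y = 1"
  shows "cmod (cinner (A *v x) y) \<le> (\<Sum>i\<in>UNIV. \<Sum>j\<in>UNIV. cmod (A $ i $ j))"
proof -
  have entry: "cmod (v $ i) \<le> 1" if "norm v = 1" for v :: "complex^'n" and i
    using Finite_Cartesian_Product.norm_nth_le[of v i] that by simp
  have "cmod (cinner (A *v x) y) \<le> (\<Sum>i\<in>UNIV. cmod ((A *v x) $ i) * cmod (y $ i))"
    unfolding cinner_def by (rule order_trans[OF norm_sum]) (simp add: norm_mult)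
  also have "\<dots> \<le> (\<Sum>i\<in>UNIV. \<Sum>j\<in>UNIV. cmod (A $ i $ j) * cmod (x $ j))"
  proof (rule sum_mono)
    fix i
    have "cmod ((A *v x) $ i) \<le> (\<Sum>j\<in>UNIV. cmod (A $ i $ j) * cmod (x $ j))"
      unfolding matrix_vector_mult_def by (simp add: order_trans[OF norm_sum] norm_mult)
    then show "cmod ((A *v x) $ i) * cmod (y $ i) \<le> (\<Sum>j\<in>UNIV. cmod (A $ i $ j) * cmod (x $ j))"
      by (meson entry[OF assms(2)] mult_left_le norm_ge_zero order_trans)
  qed
  also have "\<dots> \<le> (\<Sum>i\<in>UNIV. \<Sum>j\<in>UNIV. cmod (A $ i $ j))"
    using entry[OF assms(1)] by (intro sum_mono) (simp add: mult_left_le)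
  finally show ?thesis .
qed

lemma bdd_above_qnumradius_set:
  "bdd_above (insert 0 {cmod (cinner (A *v x) y) | x y. norm x = 1 \<and> norm y = 1 \<and> cinner x y = q})"
  by (rule bdd_aboveI[where M = "\<Sum>i\<in>UNIV. \<Sum>j\<in>UNIV. cmod (A $ i $ j)"])
    (auto simp: sum_nonneg cmod_cinner_le_entry_sum)

lemma qnumradius_upper:
  "norm x = 1 \<Longrightarrow> norm y = 1 \<Longrightarrow> cinner x y = q \<Longrightarrow> cmod (cinner (A *v x) y) \<le> qnumradius q A"
  unfolding qnumradius_def by (rule cSup_upper[OF _ bdd_above_qnumradius_set]) blast

lemma qnumradius_nonneg: "0 \<le> qnumradius q A"
  unfolding qnumradius_def by (rule cSup_upper[OF _ bdd_above_qnumradius_set]) blast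

lemma qnumradius_least:
  assumes "0 \<le> M"
    and "\<And>x y. norm x = 1 \<Longrightarrow> norm y = 1 \<Longrightarrow> cinner x y = q \<Longrightarrow> cmod (cinner (A *v x) y) \<le> M"
  shows "qnumradius q A \<le> M"
  unfolding qnumradius_def using assms by (intro cSup_least) auto

lemma cmod_cinner_unit_card_1:
  fixes x y :: "complex^'n"
  assumes "CARD('n) = 1" "norm x = 1" "norm y = 1"
  shows "cmod (cinner x y) = 1"
proof -
  obtain i :: 'n where UNIV: "UNIV = {i}"
    using assms(1) card_1_singleton_iff by (metis One_nat_def)
  have "cinner x y = x $ i * cnj (y $ i)" "norm x = cmod (x $ i)" "norm y = cmod (y $ i)"
    by (simp_all add: cinner_def norm_vec_def L2_set_def UNIV)
  then show ?thesis
    using assms(2,3) by (simp add: norm_mult)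
qed

lemma qnumradius_card_1:
  assumes "CARD('n) = 1" "cmod q \<noteq> 1"
  shows "qnumradius q (A :: complex^'n^'n) = 0"
  using qnumradius_nonneg[of q A] cmod_cinner_unit_card_1[OF assms(1)] assms(2)
  by (metis order_antisym order_refl qnumradius_least)

lemma exists_orthogonal_unit:
  fixes z :: "complex^'n"
  assumes "2 \<le> CARD('n)"
  obtains e where "cinner z e = 0" "norm e = 1"
proof -
  obtain i j :: 'n where "i \<noteq> j"
    using assms card_le_Suc0_iff_eq[of "UNIV :: 'n set"] by fastforce
  define e where "e = cnj (z $ j) *s axis i 1 + (- cnj (z $ i)) *s axis j 1"
  have "cinner z e = 0"
    unfolding e_def cinner_add_right cinner_smult_right cinner_axis_right by simp
  show thesis
  proof (cases "z $ i = 0")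
    case True
    then show thesis
      using that[of "axis i 1"] by (simp add: cinner_axis_right norm_eq_1_iff_cinner_self)
  next
    case False
    then have "e \<noteq> 0"
      using \<open>i \<noteq> j\<close> by (auto simp: e_def vec_eq_iff axis_def dest: spec[of _ j])
    then show thesis
      using that[of "of_real (1 / norm e) *s e"] \<open>cinner z e = 0\<close>
      by (simp add: cinner_smult_right norm_smult norm_divide)
  qed
qed

lemma cmod_mult_numrange_le_qnumradius:
  fixes A :: "complex^'n^'n"
  assumes "cmod q \<le> 1" "cmod q = 1 \<or> 2 \<le> CARD('n)" "norm z = 1"
  shows "cmod q * cmod (cinner (A *v z) z) \<le> qnumradius q A"
proof -
  obtain e where "cinner z e = 0" and norm_e: "(norm e)\<^sup>2 = 1 - (cmod q)\<^sup>2"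
  proof (cases "cmod q = 1")
    case True
    then show thesis
      using that[of 0] by simp
  next
    case False
    then obtain u where "cinner z u = 0" "norm u = 1"
      using exists_orthogonal_unit assms(2) by metis
    then show thesis
      using that[of "of_real (sqrt (1 - (cmod q)\<^sup>2)) *s u"] assms(1)
      by (simp add: cinner_smult_right norm_smult power_le_one)
  qed
  have "cinner e z = 0"
    using \<open>cinner z e = 0\<close> cinner_commute[of e z] by simp
  have admissible: "norm (cnj q *s z + c *s e) = 1 \<and> cinner z (cnj q *s z + c *s e) = q"
    if "cmod c = 1" for c
  proof -
    have "cinner (cnj q *s z + c *s e) (cnj q *s z + c *s e)
        = (cnj q * q) * cinner z z + (c * cnj c) * cinner e e"
      using \<open>cinner z e = 0\<close> \<open>cinner e z = 0\<close>
      by (simp add: cinner_add_left cinner_add_right cinner_smult_left cinner_smult_right mult_ac)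
    also have "\<dots> = of_real ((cmod q)\<^sup>2 + (norm e)\<^sup>2)"
      using that assms(3) unfolding cinner_self complex_norm_square[symmetric]
      by (simp add: mult.commute[of "cnj q"] complex_norm_square[symmetric])
    also have "\<dots> = 1"
      using norm_e by simp
    finally show ?thesis
      using assms(3) \<open>cinner z e = 0\<close>
      by (simp add: norm_eq_1_iff_cinner_self cinner_add_right cinner_smult_right cinner_self)
  qed
  have "cinner (A *v z) (cnj q *s z + 1 *s e) + cinner (A *v z) (cnj q *s z + (- 1) *s e)
      = 2 * q * cinner (A *v z) z"
    unfolding cinner_add_right cinner_smult_right by simp
  then have "2 * (cmod q * cmod (cinner (A *v z) z))
      = cmod (cinner (A *v z) (cnj q *s z + 1 *s e) + cinner (A *v z) (cnj q *s z + (- 1) *s e))"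
    by (simp add: norm_mult)
  also have "\<dots> \<le> qnumradius q A + qnumradius q A"
    using admissible[of 1] admissible[of "- 1"] assms(3)
    by (intro norm_triangle_le add_mono qnumradius_upper) simp_all
  finally show ?thesis
    by simp
qed

lemma Re_quadratic_form_le_qnumradius:
  fixes A :: "complex^'n^'n"
  assumes "0 < cmod q" "cmod q \<le> 1" "cmod q = 1 \<or> 2 \<le> CARD('n)"
  shows "Re (cinner (A *v z) z) \<le> qnumradius q A / cmod q * (norm z)\<^sup>2"
proof (cases "z = 0")
  case True
  then show ?thesis by simp
next
  case False
  then obtain u where "norm u = 1" and z: "cinner (A *v z) z = of_real ((norm z)\<^sup>2) * cinner (A *v u) u"
    by (rule quadratic_form_normalize)
  have "cmod q * Re (cinner (A *v u) u) \<le> cmod q * cmod (cinner (A *v u) u)"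
    by (simp add: mult_left_mono complex_Re_le_cmod)
  also have "\<dots> \<le> qnumradius q A"
    by (rule cmod_mult_numrange_le_qnumradius[OF assms(2,3) \<open>norm u = 1\<close>])
  finally have "Re (cinner (A *v u) u) \<le> qnumradius q A / cmod q"
    using assms(1) by (simp add: pos_le_divide_eq mult.commute)
  then have "(norm z)\<^sup>2 * Re (cinner (A *v u) u) \<le> (norm z)\<^sup>2 * (qnumradius q A / cmod q)"
    by (rule mult_left_mono) simp
  then show ?thesis
    unfolding z by (simp add: ac_simps)
qed

lemma qnumradius_mult_sectorial:
  fixes A B :: "complex^'n^'n"
  assumes "0 < cmod q" "cmod q \<le> 1" "0 \<le> \<alpha>" "\<alpha> < pi / 2" "A \<in> Pi_s \<alpha>" "B \<in> Pi_s \<alpha>"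
  shows "(cmod q)\<^sup>2 * qnumradius q (A ** B) \<le> (1 / (cos \<alpha>)\<^sup>2) * qnumradius q A * qnumradius q B"
proof (cases "CARD('n) = 1 \<and> cmod q \<noteq> 1")
  case True
  then show ?thesis
    by (simp add: qnumradius_card_1 qnumradius_nonneg)
next
  case False
  have "0 < CARD('n)"
    by simp
  with False have dim: "cmod q = 1 \<or> 2 \<le> CARD('n)"
    by (cases "cmod q = 1") arith+
  define M\<^sub>A where "M\<^sub>A = qnumradius q A / cmod q"
  define M\<^sub>B where "M\<^sub>B = qnumradius q B / cmod q"
  have "0 < cos \<alpha>"
    using assms by (simp add: cos_gt_zero_pi)
  have "qnumradius q (A ** B) \<le> M\<^sub>A * M\<^sub>B / (cos \<alpha>)\<^sup>2"
  proof (rule qnumradius_least)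
    show "0 \<le> M\<^sub>A * M\<^sub>B / (cos \<alpha>)\<^sup>2"
      by (simp add: M\<^sub>A_def M\<^sub>B_def qnumradius_nonneg)
    show "cmod (cinner ((A ** B) *v x) y) \<le> M\<^sub>A * M\<^sub>B / (cos \<alpha>)\<^sup>2"
      if "norm x = 1" "norm y = 1" for x y
      using sectorial_product_bound[OF assms(3-6) _ _ Re_quadratic_form_le_qnumradius
          Re_quadratic_form_le_qnumradius, of q q x y] assms(1,2) dim that \<open>0 < cos \<alpha>\<close>
      by (simp add: M\<^sub>A_def M\<^sub>B_def qnumradius_nonneg pos_le_divide_eq mult_ac)
  qed
  then have "(cmod q)\<^sup>2 * qnumradius q (A ** B) \<le> (cmod q)\<^sup>2 * (M\<^sub>A * M\<^sub>B / (cos \<alpha>)\<^sup>2)"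
    by (rule mult_left_mono) simp
  also have "\<dots> = (1 / (cos \<alpha>)\<^sup>2) * qnumradius q A * qnumradius q B"
    using assms(1) by (simp add: M\<^sub>A_def M\<^sub>B_def power2_eq_square)
  finally show ?thesis .
qed

theorem corollary2p12:
  fixes q :: complex and A B :: "complex^'n^'n"
  assumes "0 < cmod q" and "cmod q \<le> 1"
  shows "(\<forall>\<alpha>. 0 \<le> \<alpha> \<and> \<alpha> < pi / 2 \<and> A \<in> Pi_s \<alpha> \<and> B \<in> Pi_s \<alpha> \<longrightarrow>
            (cmod q)^2 * qnumradius q (A ** B)
              \<le> (1 / (cos \<alpha>)^2) * qnumradius q A * qnumradius q B)
       \<and> (A \<in> Pi_s 0 \<and> B \<in> Pi_s 0 \<longrightarrow>
            (cmod q)^2 * qnumradius q (A ** B) \<le> qnumradius q A * qnumradius q B)"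
  using qnumradius_mult_sectorial[OF assms, of _ A B] qnumradius_mult_sectorial[OF assms, of 0 A B]
  by auto

end
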